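(* Let $K$ be a nonempty finite set and $X=\Delta(K)$ with the norm $\|\cdot\|_1$. Then $D_0\subset D_1$, and the closure of $D_0$ in $\mathcal C(X)$ (uniform norm) equals $D_1$.
   Context: $X=\Delta(K)=\{p\in\mathbb R_+^K:\sum_k p^k=1\}$, viewed as a subset of $\mathbb R^K$ with $\|p\|_1=\sum_k|p^k|$. $D_1=\{f\in\mathcal C(X):\ \forall x,y\in X,\ \forall a,b\ge0,\ af(x)-bf(y)\le\|ax-by\|_1\}$. $D_0$ is the set of functions $f:X\to\mathbb R$ of the following form. There exist: - nonempty finite sets $I,J$, and - matrices $(G^k)_{k\in K}$ in $[-1,1]^{I\times J}$, such that for all $p\in X$, $f(p)=\mathrm{Val}\big(\sum_kp^kG^k\big)$, where $\mathrm{Val}$ denotes the value of a zero-sum matrix game. *)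

theory Defs
  imports "HOL-Analysis.Analysis"
begin

definition DeltaK :: "(real^'k::finite) set" where
  "DeltaK = {p. (\<forall>k. 0 \<le> p $ k) \<and> (\<Sum>k\<in>UNIV. p $ k) = 1}"

definition norm1 :: "real^'k::finite \<Rightarrow> real" where
  "norm1 x = (\<Sum>k\<in>UNIV. \<bar>x $ k\<bar>)"

definition mixed :: "nat set \<Rightarrow> (nat \<Rightarrow> real) set" where
  "mixed I = {x. (\<forall>i\<in>I. 0 \<le> x i) \<and> (\<Sum>i\<in>I. x i) = 1}"

definition Val :: "nat set \<Rightarrow> nat set \<Rightarrow> (nat \<Rightarrow> nat \<Rightarrow> real) \<Rightarrow> real" where
  "Val I J A = (SUP x\<in>mixed I. INF y\<in>mixed J. \<Sum>i\<in>I. \<Sum>j\<in>J. x i * A i j * y j)"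

definition D1 :: "(real^'k::finite \<Rightarrow> real) set" where
  "D1 = {f. continuous_on DeltaK f \<and>
          (\<forall>x\<in>DeltaK. \<forall>y\<in>DeltaK. \<forall>a b::real. 0 \<le> a \<longrightarrow> 0 \<le> b \<longrightarrow>
              a * f x - b * f y \<le> norm1 (a *\<^sub>R x - b *\<^sub>R y))}"

definition D0 :: "(real^'k::finite \<Rightarrow> real) set" where
  "D0 = {f. \<exists>(I::nat set) (J::nat set) (G::'k \<Rightarrow> nat \<Rightarrow> nat \<Rightarrow> real).
          finite I \<and> I \<noteq> {} \<and> finite J \<and> J \<noteq> {} \<and>
          (\<forall>k. \<forall>i\<in>I. \<forall>j\<in>J. \<bar>G k i j\<bar> \<le> 1) \<and>
          (\<forall>p\<in>DeltaK. f p = Val I J (\<lambda>i j. \<Sum>k\<in>UNIV. p $ k * G k i j))}"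

text \<open>Closure of a set S of functions within C(X), X = DeltaK, for the uniform norm.
  Functions are compared only on X.\<close>
definition unif_closure :: "(real^'k::finite \<Rightarrow> real) set \<Rightarrow> (real^'k \<Rightarrow> real) set" where
  "unif_closure S = {f. continuous_on DeltaK f \<and>
       (\<forall>e>0. \<exists>g\<in>S. \<forall>x\<in>DeltaK. \<bar>f x - g x\<bar> < e)}"

end

theory Submission
  imports Defs
begin

(* The value of a finite game is monotone with respect to uniform
       perturbations of the payoff matrix, positively homogeneous, bounded below by any
       pure row minimum and above by any pure column maximum.
   (2) D0 \<subseteq> D1: every entry p \<mapsto> \<Sum>_k p^k G^k_ij with |G^k_ij| \<le> 1 satisfies the D1
       inequality, and (1) transfers it from the entries to the value.
   (3) D1 is closed under uniform approximation on X, hence closure(D0) \<subseteq> D1.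
   (4) D1 \<subseteq> closure(D0).  A function f \<in> D1 satisfies
       \<alpha> f(u) + \<beta> f(w) \<le> \<parallel>\<alpha>u + \<beta>w\<parallel>_1 for ALL real \<alpha>, \<beta>; by separating hyperplanes this
       yields, for any u, w \<in> X, a vector c \<in> [-1,1]^K with c\<cdot>u = f(u), c\<cdot>w = f(w).
       Given an \<epsilon>-net t_1..t_n of X, let G_ij \<in> [-1,1]^K interpolate f at t_i and t_j.
       In the game with entries G_ij\<cdot>p, row i guarantees about f(t_i) and column i
       concedes about f(t_i), so its value is within 2\<epsilon> of f(p) whenever p is
       \<epsilon>-close to t_i. *)

section \<open>Finite matrix games\<close>

definition payoff :: "nat set \<Rightarrow> nat set \<Rightarrow> (nat \<Rightarrow> nat \<Rightarrow> real) \<Rightarrow> (nat \<Rightarrow> real) \<Rightarrow> (nat \<Rightarrow> real) \<Rightarrow> real" where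
  "payoff I J A x y = (\<Sum>i\<in>I. \<Sum>j\<in>J. x i * A i j * y j)"

lemma Val_payoff: "Val I J A = (SUP x\<in>mixed I. INF y\<in>mixed J. payoff I J A x y)"
  by (simp add: Val_def payoff_def)

lemma payoff_diff: "payoff I J A x y - payoff I J B x y = payoff I J (\<lambda>i j. A i j - B i j) x y"
  unfolding payoff_def by (simp add: sum_subtractf[symmetric] algebra_simps)

lemma payoff_scale: "payoff I J (\<lambda>i j. a * A i j) x y = a * payoff I J A x y"
  unfolding payoff_def by (simp add: sum_distrib_left mult_ac)

text \<open>The payoff is an average of matrix entries, so entry bounds are payoff bounds.\<close>
lemma payoff_upper:
  assumes "\<forall>i\<in>I. \<forall>j\<in>J. A i j \<le> M" "x \<in> mixed I" "y \<in> mixed J"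
  shows "payoff I J A x y \<le> M"
proof -
  have "payoff I J A x y \<le> (\<Sum>i\<in>I. \<Sum>j\<in>J. x i * M * y j)"
    unfolding payoff_def using assms
    by (intro sum_mono mult_right_mono mult_left_mono) (auto simp: mixed_def)
  also have "\<dots> = M * (\<Sum>i\<in>I. x i) * (\<Sum>j\<in>J. y j)"
    by (simp add: sum_distrib_left sum_distrib_right mult_ac)
  also have "\<dots> = M" using assms by (simp add: mixed_def)
  finally show ?thesis .
qed

lemma payoff_lower:
  assumes "\<forall>i\<in>I. \<forall>j\<in>J. M \<le> A i j" "x \<in> mixed I" "y \<in> mixed J"
  shows "M \<le> payoff I J A x y"
  using payoff_upper[of I J "\<lambda>i j. - A i j" "- M" x y] assms payoff_scale[of I J "-1" A x y]
  by simp

lemma pure_mixed: "finite I \<Longrightarrow> i0 \<in> I \<Longrightarrow> (\<lambda>i. if i = i0 then 1 else 0) \<in> mixed I"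
  by (auto simp: mixed_def)

lemma finite_matrix_bounded: "finite I \<Longrightarrow> finite J \<Longrightarrow> \<exists>M. \<forall>i\<in>I. \<forall>j\<in>J. \<bar>A i j\<bar> \<le> (M::real)"
  by (rule exI[of _ "\<Sum>i\<in>I. \<Sum>j\<in>J. \<bar>A i j\<bar>"])
     (metis (no_types, lifting) abs_ge_zero member_le_sum order.trans sum_nonneg)

locale matrix_game =
  fixes I J :: "nat set"
  assumes fin_I: "finite I" and fin_J: "finite J" and ne_I: "I \<noteq> {}" and ne_J: "J \<noteq> {}"
begin

lemma mixed_I_ne: "mixed I \<noteq> {}" and mixed_J_ne: "mixed J \<noteq> {}"
  using pure_mixed[OF fin_I] pure_mixed[OF fin_J] ne_I ne_J by blast+

lemma bdd_below_payoff: "bdd_below ((\<lambda>y. payoff I J A x y) ` mixed J)" if "x \<in> mixed I"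
proof -
  obtain M where "\<forall>i\<in>I. \<forall>j\<in>J. \<bar>A i j\<bar> \<le> M" using finite_matrix_bounded[OF fin_I fin_J] by blast
  then have "\<forall>i\<in>I. \<forall>j\<in>J. -M \<le> A i j" by (metis abs_le_D2 minus_le_iff)
  then show ?thesis by (intro bdd_belowI2 payoff_lower[OF _ that])
qed

lemma bdd_above_INF_payoff: "bdd_above ((\<lambda>x. INF y\<in>mixed J. payoff I J A x y) ` mixed I)"
proof -
  obtain M where M: "\<forall>i\<in>I. \<forall>j\<in>J. \<bar>A i j\<bar> \<le> M" using finite_matrix_bounded[OF fin_I fin_J] by blast
  obtain y0 where y0: "y0 \<in> mixed J" using mixed_J_ne by blast
  have "(INF y\<in>mixed J. payoff I J A x y) \<le> M" if x: "x \<in> mixed I" for x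
  proof -
    have "(INF y\<in>mixed J. payoff I J A x y) \<le> payoff I J A x y0"
      by (rule cINF_lower[OF bdd_below_payoff[OF x] y0])
    also have "\<dots> \<le> M" using M by (intro payoff_upper[OF _ x y0]) (auto simp: abs_le_iff)
    finally show ?thesis .
  qed
  then show ?thesis by (rule bdd_aboveI2)
qed

lemma Val_compare:
  assumes "\<forall>x\<in>mixed I. \<forall>y\<in>mixed J. payoff I J A x y \<le> payoff I J B x y + c"
  shows "Val I J A \<le> Val I J B + c"
  unfolding Val_payoff
proof (rule cSUP_least[OF mixed_I_ne])
  fix x assume x: "x \<in> mixed I"
  have "(INF y\<in>mixed J. payoff I J A x y) - c \<le> (INF y\<in>mixed J. payoff I J B x y)"
  proof (rule cINF_greatest[OF mixed_J_ne])
    fix y assume y: "y \<in> mixed J"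
    have "(INF y\<in>mixed J. payoff I J A x y) \<le> payoff I J A x y"
      by (rule cINF_lower[OF bdd_below_payoff[OF x] y])
    then show "(INF y\<in>mixed J. payoff I J A x y) - c \<le> payoff I J B x y" using assms x y by fastforce
  qed
  also have "\<dots> \<le> (SUP x\<in>mixed I. INF y\<in>mixed J. payoff I J B x y)"
    by (rule cSUP_upper[OF x bdd_above_INF_payoff])
  finally show "(INF y\<in>mixed J. payoff I J A x y) \<le> (SUP x\<in>mixed I. INF y\<in>mixed J. payoff I J B x y) + c"
    by simp
qed

text \<open>One half of positive homogeneity; the other half follows by scaling with 1/a.\<close>
lemma Val_scale_le:
  assumes "0 < (a::real)"
  shows "Val I J (\<lambda>i j. a * A i j) \<le> a * Val I J A"
  unfolding Val_payoff
proof (rule cSUP_least[OF mixed_I_ne])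
  fix x assume x: "x \<in> mixed I"
  have "(INF y\<in>mixed J. payoff I J (\<lambda>i j. a * A i j) x y) / a \<le> (INF y\<in>mixed J. payoff I J A x y)"
  proof (rule cINF_greatest[OF mixed_J_ne])
    fix y assume y: "y \<in> mixed J"
    have "(INF y\<in>mixed J. payoff I J (\<lambda>i j. a * A i j) x y) \<le> payoff I J (\<lambda>i j. a * A i j) x y"
      by (rule cINF_lower[OF bdd_below_payoff[OF x] y])
    then show "(INF y\<in>mixed J. payoff I J (\<lambda>i j. a * A i j) x y) / a \<le> payoff I J A x y"
      using assms by (simp add: payoff_scale divide_simps mult.commute)
  qed
  also have "\<dots> \<le> (SUP x\<in>mixed I. INF y\<in>mixed J. payoff I J A x y)"
    by (rule cSUP_upper[OF x bdd_above_INF_payoff])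
  finally show "(INF y\<in>mixed J. payoff I J (\<lambda>i j. a * A i j) x y) \<le> a * (SUP x\<in>mixed I. INF y\<in>mixed J. payoff I J A x y)"
    using assms by (simp add: divide_simps mult.commute)
qed

lemma Val_scale:
  assumes "0 \<le> (a::real)"
  shows "Val I J (\<lambda>i j. a * A i j) = a * Val I J A"
proof (cases "a = 0")
  case True
  then show ?thesis using mixed_I_ne mixed_J_ne by (simp add: Val_payoff payoff_def)
next
  case False
  with assms have a: "a > 0" by simp
  have "Val I J (\<lambda>i j. (1/a) * (a * A i j)) \<le> (1/a) * Val I J (\<lambda>i j. a * A i j)"
    using a by (intro Val_scale_le) simp
  then have "a * Val I J A \<le> Val I J (\<lambda>i j. a * A i j)"
    using a by (simp add: divide_simps mult.commute)
  with Val_scale_le[OF a, of A] show ?thesis by linarith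
qed

lemma Val_lower:
  assumes "i0 \<in> I" "\<forall>j\<in>J. L \<le> A i0 j"
  shows "L \<le> Val I J A"
proof -
  define x0 where "x0 = (\<lambda>i. if i = i0 then 1 else (0::real))"
  have x0: "x0 \<in> mixed I" unfolding x0_def by (rule pure_mixed[OF fin_I assms(1)])
  have "L \<le> (INF y\<in>mixed J. payoff I J A x0 y)"
  proof (rule cINF_greatest[OF mixed_J_ne])
    fix y assume y: "y \<in> mixed J"
    have "payoff I J A x0 y = (\<Sum>i\<in>I. if i = i0 then (\<Sum>j\<in>J. A i0 j * y j) else 0)"
      unfolding payoff_def x0_def by (intro sum.cong) auto
    also have "\<dots> = (\<Sum>j\<in>J. A i0 j * y j)" using assms fin_I by simp
    also have "\<dots> \<ge> (\<Sum>j\<in>J. L * y j)"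
      using assms y by (intro sum_mono mult_right_mono) (auto simp: mixed_def)
    finally show "L \<le> payoff I J A x0 y" using y by (simp add: mixed_def sum_distrib_left[symmetric])
  qed
  also have "\<dots> \<le> Val I J A" unfolding Val_payoff
    by (rule cSUP_upper[OF x0 bdd_above_INF_payoff])
  finally show ?thesis .
qed

lemma Val_upper:
  assumes "j0 \<in> J" "\<forall>i\<in>I. A i j0 \<le> U"
  shows "Val I J A \<le> U"
  unfolding Val_payoff
proof (rule cSUP_least[OF mixed_I_ne])
  fix x assume x: "x \<in> mixed I"
  define y0 where "y0 = (\<lambda>j. if j = j0 then 1 else (0::real))"
  have y0: "y0 \<in> mixed J" unfolding y0_def by (rule pure_mixed[OF fin_J assms(1)])
  have "(INF y\<in>mixed J. payoff I J A x y) \<le> payoff I J A x y0"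
    by (rule cINF_lower[OF bdd_below_payoff[OF x] y0])
  also have "payoff I J A x y0 = (\<Sum>i\<in>I. x i * A i j0)"
    unfolding payoff_def y0_def using assms fin_J by (simp add: if_distrib cong: if_cong)
  also have "\<dots> \<le> (\<Sum>i\<in>I. x i * U)"
    using assms x by (intro sum_mono mult_left_mono) (auto simp: mixed_def)
  also have "\<dots> = U" using x by (simp add: mixed_def sum_distrib_right[symmetric])
  finally show "(INF y\<in>mixed J. payoff I J A x y) \<le> U" .
qed

end

section \<open>The simplex and the l1 norm\<close>

text \<open>The l1 norm is dominated by the Euclidean norm, so l1 estimates give topological ones.\<close>
lemma norm1_le_norm: "norm1 (z::real^'k::finite) \<le> real CARD('k) * norm z"
proof -
  have "norm1 z \<le> (\<Sum>k\<in>(UNIV::'k set). norm z)"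
    unfolding norm1_def by (intro sum_mono) (rule component_le_norm_cart)
  then show ?thesis by simp
qed

lemma norm1_minus_commute: "norm1 (x - y) = norm1 (y - (x::real^'k::finite))"
  unfolding norm1_def by (simp add: abs_minus_commute)

lemma norm1_uminus: "norm1 (- x) = norm1 (x::real^'k::finite)"
  unfolding norm1_def by simp

lemma norm1_Delta: "p \<in> DeltaK \<Longrightarrow> norm1 p = 1"
  unfolding DeltaK_def norm1_def by simp

lemma norm1_nonneg_comb:
  assumes "u \<in> DeltaK" "w \<in> DeltaK" "0 \<le> a" "0 \<le> b"
  shows "norm1 (a *\<^sub>R u + b *\<^sub>R w) = a + b"
proof -
  have "norm1 (a *\<^sub>R u + b *\<^sub>R w) = (\<Sum>k\<in>UNIV. a * u$k + b * w$k)"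
    unfolding norm1_def using assms by (intro sum.cong) (auto simp: DeltaK_def)
  also have "\<dots> = a + b" using assms by (simp add: sum.distrib sum_distrib_left[symmetric] DeltaK_def)
  finally show ?thesis .
qed

lemma dot_diff_le_norm1:
  assumes "\<forall>k. \<bar>c k\<bar> \<le> (1::real)"
  shows "(\<Sum>k\<in>UNIV. c k * p$k) - (\<Sum>k\<in>UNIV. c k * q$k) \<le> norm1 (p - (q::real^'k::finite))"
proof -
  have "(\<Sum>k\<in>UNIV. c k * p$k) - (\<Sum>k\<in>UNIV. c k * q$k) = (\<Sum>k\<in>UNIV. c k * (p$k - q$k))"
    by (simp add: sum_subtractf[symmetric] algebra_simps)
  also have "\<dots> \<le> (\<Sum>k\<in>UNIV. \<bar>p$k - q$k\<bar>)"
  proof (rule sum_mono)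
    fix k
    have "c k * (p$k - q$k) \<le> \<bar>c k\<bar> * \<bar>p$k - q$k\<bar>" by (metis abs_ge_self abs_mult)
    also have "\<dots> \<le> \<bar>p$k - q$k\<bar>" using assms mult_right_mono[of "\<bar>c k\<bar>" 1] by simp
    finally show "c k * (p$k - q$k) \<le> \<bar>p$k - q$k\<bar>" .
  qed
  finally show ?thesis by (simp add: norm1_def)
qed

lemma compact_DeltaK: "compact (DeltaK :: (real^'k::finite) set)"
  unfolding compact_eq_bounded_closed
proof
  have "norm p \<le> 1" if "p \<in> (DeltaK :: (real^'k) set)" for p
    using norm_le_l1_cart[of p] norm1_Delta[OF that] by (simp add: norm1_def)
  then show "bounded (DeltaK :: (real^'k) set)" unfolding bounded_iff by blast
  have eq: "(DeltaK :: (real^'k) set) = (\<Inter>k. {p. 0 \<le> p$k}) \<inter> {p. (\<Sum>k\<in>UNIV. p$k) = 1}"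
    unfolding DeltaK_def by auto
  show "closed (DeltaK :: (real^'k) set)" unfolding eq
    by (intro closed_Int closed_INT ballI closed_Collect_le closed_Collect_eq continuous_intros)
qed

text \<open>Finite l1-nets of the simplex, indexed by an initial segment of the naturals
  (the index sets of D0 are sets of naturals).\<close>
lemma DeltaK_finite_net:
  assumes "e > 0"
  shows "\<exists>(n::nat) t. 0 < n \<and> (\<forall>i<n. t i \<in> (DeltaK :: (real^'k::finite) set)) \<and>
               (\<forall>p\<in>DeltaK. \<exists>i<n. norm1 (p - t i) < e)"
proof -
  define r where "r = e / real CARD('k)"
  have r: "r > 0" using assms by (simp add: r_def)
  obtain T where T: "T \<subseteq> (DeltaK :: (real^'k) set)" "finite T" "DeltaK \<subseteq> (\<Union>t\<in>T. ball t r)"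
    by (rule compactE_image[OF compact_DeltaK, of DeltaK "\<lambda>t. ball t r"]) (use r in auto)
  have close: "\<exists>t\<in>T. norm1 (p - t) < e" if p: "p \<in> DeltaK" for p
  proof -
    obtain t where t: "t \<in> T" "dist t p < r" using T(3) p by auto
    have "norm1 (p - t) \<le> real CARD('k) * norm (p - t)" by (rule norm1_le_norm)
    also have "\<dots> < real CARD('k) * r" using t by (simp add: dist_norm norm_minus_commute)
    finally show ?thesis using t by (auto simp: r_def)
  qed
  obtain ts where ts: "set ts = T" using finite_list[OF T(2)] by blast
  have "(\<chi> k. 1 / real CARD('k)) \<in> (DeltaK :: (real^'k) set)" unfolding DeltaK_def by simp
  then have "T \<noteq> {}" using close by blast
  show ?thesis
  proof (rule exI[of _ "length ts"], rule exI[of _ "(!) ts"], intro conjI)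
    show "0 < length ts" using ts \<open>T \<noteq> {}\<close> by auto
    show "\<forall>i<length ts. ts ! i \<in> DeltaK" using ts T(1) by auto
    show "\<forall>p\<in>DeltaK. \<exists>i<length ts. norm1 (p - ts ! i) < e" using close ts by (metis in_set_conv_nth)
  qed
qed

section \<open>D0 is contained in D1\<close>

lemma D1_ineq:
  "f \<in> D1 \<Longrightarrow> x \<in> DeltaK \<Longrightarrow> y \<in> DeltaK \<Longrightarrow> 0 \<le> a \<Longrightarrow> 0 \<le> b \<Longrightarrow>
   a * f x - b * f y \<le> norm1 (a *\<^sub>R x - b *\<^sub>R y)"
  unfolding D1_def by blast

lemma D1_lipschitz: "f \<in> D1 \<Longrightarrow> x \<in> DeltaK \<Longrightarrow> y \<in> DeltaK \<Longrightarrow> f x - f y \<le> norm1 (x - y)"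
  using D1_ineq[of f x y 1 1] by simp

lemma continuous_on_if_l1_lipschitz:
  assumes "\<forall>x\<in>DeltaK. \<forall>y\<in>DeltaK. f x - f y \<le> norm1 (x - (y::real^'k::finite))"
  shows "continuous_on DeltaK f"
proof (rule lipschitz_on_continuous_on)
  show "(real CARD('k))-lipschitz_on DeltaK f"
  proof (rule lipschitz_onI)
    fix x y :: "real^'k" assume xy: "x \<in> DeltaK" "y \<in> DeltaK"
    have "f x - f y \<le> norm1 (x - y)" "f y - f x \<le> norm1 (y - x)"
      using assms xy by auto
    then have "\<bar>f x - f y\<bar> \<le> norm1 (x - y)" using norm1_minus_commute[of x y] by linarith
    also have "\<dots> \<le> real CARD('k) * norm (x - y)" by (rule norm1_le_norm)
    finally show "dist (f x) (f y) \<le> real CARD('k) * dist x y" by (simp add: dist_norm dist_real_def)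
  qed simp
qed

lemma D0_subset_D1: "(D0 :: (real^'k::finite \<Rightarrow> real) set) \<subseteq> D1"
proof
  fix f :: "real^'k \<Rightarrow> real" assume "f \<in> D0"
  then obtain I J G where fin: "finite I" "I \<noteq> {}" "finite J" "J \<noteq> {}"
    and G: "\<forall>k. \<forall>i\<in>I. \<forall>j\<in>J. \<bar>G k i j\<bar> \<le> 1"
    and f: "\<forall>p\<in>DeltaK. f p = Val I J (\<lambda>i j. \<Sum>k\<in>UNIV. p $ k * G k i j)"
    unfolding D0_def by blast
  interpret matrix_game I J using fin by unfold_locales
  define M where "M p = (\<lambda>i j. \<Sum>k\<in>UNIV. p $ k * G k i j)" for p :: "real^'k"
  have ineq: "a * f x - b * f y \<le> norm1 (a *\<^sub>R x - b *\<^sub>R y)"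
    if xy: "x \<in> DeltaK" "y \<in> DeltaK" and ab: "0 \<le> a" "0 \<le> b" for x y a b
  proof -
    let ?d = "norm1 (a *\<^sub>R x - b *\<^sub>R y)"
    text \<open>Entrywise, the inequality is the Lipschitz property of a [-1,1] functional.\<close>
    have entry: "a * M x i j - b * M y i j \<le> ?d" if "i \<in> I" "j \<in> J" for i j
    proof -
      have "a * M x i j - b * M y i j = (\<Sum>k\<in>UNIV. G k i j * (a *\<^sub>R x - b *\<^sub>R y)$k) - (\<Sum>k\<in>UNIV. G k i j * (0::real^'k)$k)"
        unfolding M_def by (simp add: sum_distrib_left sum_subtractf[symmetric] algebra_simps)
      also have "\<dots> \<le> norm1 ((a *\<^sub>R x - b *\<^sub>R y) - 0)"
        by (rule dot_diff_le_norm1) (use G that in auto)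
      finally show ?thesis by simp
    qed
    have "a * f x = Val I J (\<lambda>i j. a * M x i j)" using Val_scale[OF ab(1)] f xy by (simp add: M_def)
    also have "\<dots> \<le> Val I J (\<lambda>i j. b * M y i j) + ?d"
    proof (intro Val_compare ballI)
      fix x' y' assume "x' \<in> mixed I" "y' \<in> mixed J"
      then have "payoff I J (\<lambda>i j. a * M x i j - b * M y i j) x' y' \<le> ?d"
        using entry by (intro payoff_upper) auto
      then show "payoff I J (\<lambda>i j. a * M x i j) x' y' \<le> payoff I J (\<lambda>i j. b * M y i j) x' y' + ?d"
        using payoff_diff[of I J "\<lambda>i j. a * M x i j" x' y' "\<lambda>i j. b * M y i j"] by linarith
    qed
    also have "Val I J (\<lambda>i j. b * M y i j) = b * f y" using Val_scale[OF ab(2)] f xy by (simp add: M_def)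
    finally show ?thesis by simp
  qed
  have "continuous_on DeltaK f"
    by (rule continuous_on_if_l1_lipschitz) (use ineq[where a=1 and b=1] in simp)
  then show "f \<in> D1" unfolding D1_def using ineq by blast
qed

section \<open>D1 is closed under uniform approximation\<close>

text \<open>The D1 inequality passes to uniform limits: the error in a f x - b f y is at most (a+b)e.\<close>
lemma uniform_limit_in_D1:
  assumes cont: "continuous_on DeltaK f"
    and approx: "\<forall>e>0. \<exists>g\<in>(D1 :: (real^'k::finite \<Rightarrow> real) set). \<forall>x\<in>DeltaK. \<bar>f x - g x\<bar> < e"
  shows "f \<in> D1"
proof -
  have "a * f x - b * f y \<le> norm1 (a *\<^sub>R x - b *\<^sub>R y)"
    if xy: "x \<in> DeltaK" "y \<in> DeltaK" and ab: "0 \<le> a" "0 \<le> b" for x y a b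
  proof (rule field_le_epsilon)
    fix e :: real assume e: "e > 0"
    define e' where "e' = e / (a + b + 1)"
    have e': "e' > 0" using e ab by (simp add: e'_def)
    obtain g where g: "g \<in> D1" and gf: "\<forall>x\<in>DeltaK. \<bar>f x - g x\<bar> < e'" using approx e' by blast
    have "f x - g x \<le> e'" "g y - f y \<le> e'"
      using gf xy by (fastforce simp: abs_less_iff)+
    then have "a * (f x - g x) \<le> a * e'" "b * (g y - f y) \<le> b * e'"
      using ab by (simp_all add: mult_left_mono)
    moreover have "(a + b) * e' \<le> e" unfolding e'_def using e ab by (simp add: field_simps)
    moreover have "a * g x - b * g y \<le> norm1 (a *\<^sub>R x - b *\<^sub>R y)" by (rule D1_ineq[OF g xy ab])
    ultimately show "a * f x - b * f y \<le> norm1 (a *\<^sub>R x - b *\<^sub>R y) + e"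
      by (simp add: algebra_simps)
  qed
  then show "f \<in> D1" unfolding D1_def using cont by blast
qed

lemma closure_D0_subset_D1: "unif_closure (D0 :: (real^'k::finite \<Rightarrow> real) set) \<subseteq> D1"
proof
  fix f :: "real^'k \<Rightarrow> real" assume "f \<in> unif_closure D0"
  then have "continuous_on DeltaK f" "\<forall>e>0. \<exists>g\<in>D1. \<forall>x\<in>DeltaK. \<bar>f x - g x\<bar> < e"
    using D0_subset_D1 unfolding unif_closure_def by blast+
  then show "f \<in> D1" by (rule uniform_limit_in_D1)
qed

section \<open>D1 is contained in the closure of D0\<close>

lemma D1_bounded:
  assumes "f \<in> D1" "u \<in> DeltaK"
  shows "\<bar>f u\<bar> \<le> 1"
  using D1_ineq[OF assms assms(2), of 1 0] D1_ineq[OF assms assms(2), of 0 1]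
    norm1_Delta[OF assms(2)] norm1_uminus[of u]
  by (simp add: abs_le_iff)

text \<open>The D1 inequality extends to coefficients of arbitrary sign: for signs (+,-) and (-,+)
  it is the definition; for equal signs it follows from the bound |f| \<le> 1 and
  additivity of the l1 norm on nonnegative combinations.\<close>
lemma D1_ineq_real_coeffs:
  assumes f: "f \<in> D1" and uw: "u \<in> DeltaK" "w \<in> DeltaK"
  shows "\<alpha> * f u + \<beta> * f w \<le> norm1 (\<alpha> *\<^sub>R u + \<beta> *\<^sub>R w)"
proof -
  have scaled: "s * f v \<le> \<bar>s\<bar>" if "v \<in> DeltaK" for s v
  proof -
    have "s * f v \<le> \<bar>s\<bar> * \<bar>f v\<bar>" by (metis abs_ge_self abs_mult)
    also have "\<dots> \<le> \<bar>s\<bar>" using D1_bounded[OF f that] by (simp add: mult_left_le)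
    finally show ?thesis .
  qed
  have "\<alpha> * f u \<le> \<bar>\<alpha>\<bar>" "\<beta> * f w \<le> \<bar>\<beta>\<bar>" using scaled uw by blast+
  consider "0 \<le> \<alpha>" "0 \<le> \<beta>" | "\<alpha> \<le> 0" "\<beta> \<le> 0" | "0 \<le> \<alpha>" "\<beta> \<le> 0" | "\<alpha> \<le> 0" "0 \<le> \<beta>"
    by linarith
  then show ?thesis
  proof cases
    case 1
    then show ?thesis using norm1_nonneg_comb[OF uw 1] \<open>\<alpha> * f u \<le> \<bar>\<alpha>\<bar>\<close> \<open>\<beta> * f w \<le> \<bar>\<beta>\<bar>\<close> by simp
  next
    case 2
    have "norm1 (\<alpha> *\<^sub>R u + \<beta> *\<^sub>R w) = norm1 ((-\<alpha>) *\<^sub>R u + (-\<beta>) *\<^sub>R w)"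
      using norm1_uminus[of "\<alpha> *\<^sub>R u + \<beta> *\<^sub>R w"] by simp
    also have "\<dots> = -\<alpha> - \<beta>" using norm1_nonneg_comb[OF uw, of "-\<alpha>" "-\<beta>"] 2 by simp
    finally show ?thesis using 2 \<open>\<alpha> * f u \<le> \<bar>\<alpha>\<bar>\<close> \<open>\<beta> * f w \<le> \<bar>\<beta>\<bar>\<close> by simp
  next
    case 3
    then show ?thesis using D1_ineq[OF f uw, of \<alpha> "-\<beta>"] by simp
  next
    case 4
    then show ?thesis using D1_ineq[OF f uw(2,1), of \<beta> "-\<alpha>"] by (simp add: add.commute)
  qed
qed

text \<open>Two-point interpolation: on any two points of the simplex, f \<in> D1 agrees with a linear
  functional with coefficients in [-1,1].  Otherwise (f u, f w) could be strictly separated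
  from the compact convex image of the cube [-1,1]^K under c \<mapsto> (c\<cdot>u, c\<cdot>w); testing the
  separating functional (a1,a2) at the worst vertex c = -sgn(a1 u + a2 w) contradicts
  lemma D1_ineq_real_coeffs.\<close>
lemma D1_two_point_interpolation:
  assumes f: "f \<in> D1" and uw: "u \<in> DeltaK" "w \<in> (DeltaK :: (real^'k::finite) set)"
  shows "\<exists>c::real^'k. (\<forall>k. \<bar>c$k\<bar> \<le> 1) \<and> (\<Sum>k\<in>UNIV. c$k * u$k) = f u \<and> (\<Sum>k\<in>UNIV. c$k * w$k) = f w"
proof (rule ccontr)
  assume no_interp: "\<not> ?thesis"
  define L where "L c = (\<Sum>k\<in>UNIV. c$k * u$k, \<Sum>k\<in>UNIV. c$k * w$k)" for c :: "real^'k"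
  define Q where "Q = cbox (-1) (1::real^'k)"
  have Q_iff: "c \<in> Q \<longleftrightarrow> (\<forall>k. \<bar>c$k\<bar> \<le> 1)" for c
    unfolding Q_def mem_box_cart by (auto simp: abs_le_iff)
  have lin: "linear L" unfolding L_def
    by (intro linearI) (auto simp: sum.distrib sum_distrib_left algebra_simps)
  have "(f u, f w) \<notin> L ` Q" using no_interp Q_iff by (auto simp: L_def)
  moreover have "convex (L ` Q)" by (rule convex_linear_image[OF lin]) (simp add: Q_def)
  moreover have "closed (L ` Q)"
    using lin linear_conv_bounded_linear[of L]
    by (intro compact_imp_closed compact_continuous_image) (auto simp: Q_def intro: linear_continuous_on)
  ultimately obtain a b where ab: "inner a (f u, f w) < b" "\<forall>x\<in>L ` Q. inner a x > b"
    using separating_hyperplane_closed_point by blast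
  obtain a1 a2 where a: "a = (a1, a2)" by (cases a)
  define d where "d = a1 *\<^sub>R u + a2 *\<^sub>R w"
  define c where "c = (\<chi> k. - sgn (d$k))"
  have "c \<in> Q" unfolding Q_iff c_def by (auto simp: sgn_if)
  have "inner a (L c) = (\<Sum>k\<in>UNIV. c$k * d$k)"
    unfolding a L_def d_def by (simp add: sum_distrib_left sum.distrib algebra_simps)
  also have "\<dots> = - norm1 d"
    unfolding norm1_def c_def by (simp add: sum_negf[symmetric] mult.commute[of "sgn _"] abs_sgn[symmetric])
  finally have "a1 * f u + a2 * f w < - norm1 d" using ab a \<open>c \<in> Q\<close> by force
  moreover have "(-a1) * f u + (-a2) * f w \<le> norm1 ((-a1) *\<^sub>R u + (-a2) *\<^sub>R w)"
    by (rule D1_ineq_real_coeffs[OF f uw])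
  moreover have "(-a1) *\<^sub>R u + (-a2) *\<^sub>R w = - d" by (simp add: d_def)
  ultimately show False using norm1_uminus[of d] by simp
qed

lemma interpolant_error:
  assumes f: "f \<in> D1" and p: "p \<in> DeltaK" and t: "t \<in> DeltaK"
    and c: "\<forall>k. \<bar>c$k\<bar> \<le> 1" "(\<Sum>k\<in>UNIV. c$k * t$k) = f t"
  shows "\<bar>(\<Sum>k\<in>UNIV. p$k * c$k) - f p\<bar> \<le> 2 * norm1 (p - (t::real^'k::finite))"
proof -
  have "(\<Sum>k\<in>UNIV. c$k * p$k) - (\<Sum>k\<in>UNIV. c$k * t$k) \<le> norm1 (p - t)"
       "(\<Sum>k\<in>UNIV. c$k * t$k) - (\<Sum>k\<in>UNIV. c$k * p$k) \<le> norm1 (t - p)"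
    using c(1) by (intro dot_diff_le_norm1; simp)+
  moreover have "f p - f t \<le> norm1 (p - t)" "f t - f p \<le> norm1 (t - p)"
    using D1_lipschitz[OF f] p t by blast+
  ultimately show ?thesis
    using c(2) norm1_minus_commute[of p t] by (simp add: mult.commute abs_le_iff)
qed

lemma D1_subset_closure_D0: "(D1 :: (real^'k::finite \<Rightarrow> real) set) \<subseteq> unif_closure D0"
proof
  fix f :: "real^'k \<Rightarrow> real" assume f: "f \<in> D1"
  have "\<exists>g\<in>D0. \<forall>x\<in>DeltaK. \<bar>f x - g x\<bar> < e" if e: "e > 0" for e
  proof -
    obtain n and t :: "nat \<Rightarrow> real^'k" where n: "0 < n" and t: "\<forall>i<n. t i \<in> DeltaK"
      and net: "\<forall>p\<in>DeltaK. \<exists>i<n. norm1 (p - t i) < e/2"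
      using DeltaK_finite_net[of "e/2"] e by auto
    have "\<forall>i j. \<exists>c::real^'k. i < n \<longrightarrow> j < n \<longrightarrow> (\<forall>k. \<bar>c$k\<bar> \<le> 1) \<and>
        (\<Sum>k\<in>UNIV. c$k * t i$k) = f (t i) \<and> (\<Sum>k\<in>UNIV. c$k * t j$k) = f (t j)"
      using D1_two_point_interpolation[OF f] t by blast
    then obtain C where C: "\<And>i j. i < n \<Longrightarrow> j < n \<Longrightarrow> (\<forall>k. \<bar>C i j$k\<bar> \<le> 1) \<and>
        (\<Sum>k\<in>UNIV. C i j$k * t i$k) = f (t i) \<and> (\<Sum>k\<in>UNIV. C i j$k * t j$k) = f (t j)"
      by metis
    define g where "g p = Val {..<n} {..<n} (\<lambda>i j. \<Sum>k\<in>UNIV. p $ k * C i j $ k)" for p :: "real^'k"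
    interpret matrix_game "{..<n}" "{..<n}" using n by unfold_locales auto
    have "g \<in> D0" unfolding D0_def
      by (rule CollectI, rule exI[of _ "{..<n}"], rule exI[of _ "{..<n}"], rule exI[of _ "\<lambda>k i j. C i j $ k"])
         (use n C in \<open>auto simp: g_def\<close>)
    moreover have "\<bar>f p - g p\<bar> < e" if p: "p \<in> DeltaK" for p
    proof -
      obtain m where m: "m < n" "norm1 (p - t m) < e/2" using net p by blast
      have tm: "t m \<in> DeltaK" using t m(1) by blast
      let ?r = "2 * norm1 (p - t m)"
      text \<open>Row m and column m of the game are both close to f p.\<close>
      have row: "f p - ?r \<le> (\<Sum>k\<in>UNIV. p$k * C m j$k)" if "j < n" for j
        using interpolant_error[OF f p tm, of "C m j"] C[OF m(1) that] by (simp add: abs_le_iff)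
      have col: "(\<Sum>k\<in>UNIV. p$k * C i m$k) \<le> f p + ?r" if "i < n" for i
        using interpolant_error[OF f p tm, of "C i m"] C[OF that m(1)] by (simp add: abs_le_iff)
      have "f p - ?r \<le> g p" unfolding g_def using m(1) row by (intro Val_lower[of m]) auto
      moreover have "g p \<le> f p + ?r" unfolding g_def using m(1) col by (intro Val_upper[of m]) auto
      ultimately show ?thesis using m(2) by linarith
    qed
    ultimately show ?thesis by blast
  qed
  moreover have "continuous_on DeltaK f" using f by (simp add: D1_def)
  ultimately show "f \<in> unif_closure D0" unfolding unif_closure_def by blast
qed

theorem lemma3:
  shows "(D0 :: (real^'k::finite \<Rightarrow> real) set) \<subseteq> D1 \<and> unif_closure (D0 :: (real^'k \<Rightarrow> real) set) = D1"
  using D0_subset_D1 closure_D0_subset_D1 D1_subset_closure_D0 by blast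

end
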